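(* Let $A$ be a countable non-empty set of agents and, for each $i\in A$, let $\mathbf{S}_i$ be a compact topological space; put $\mathbf{S}=\prod_{i\in A}\mathbf{S}_i$ with the product topology. Let $\mathcal{G}$ be a compact-strategies, open-preferences class of normal-form games over these agents and strategy spaces, and let $\mathcal{G}'\subseteq\mathcal{G}$ be dense in $\mathcal{G}$. If every game $G\in\mathcal{G}'$ has a Nash equilibrium, then every game $G\in\mathcal{G}$ has a Nash equilibrium.
   Context: A normal-form game over $A$ and $(\mathbf{S}_i)_{i\in A}$ is given by a family of preference relations $\prec_i^G\subseteq\mathbf{S}\times\mathbf{S}$, $i\in A$. A strategy profile $\sigma\in\mathbf{S}$ is a Nash equilibrium of $G$ if there is no agent $i$ and no $s_i\in\mathbf{S}_i$ with $\sigma\prec^G_i\sigma_{i\mapsto s_i}$, where $\sigma_{i\mapsto s_i}$ agrees with $\sigma$ except that its $i$-th component is $s_i$. A class $\mathcal{G}$ of such games (all with the same agents and strategy spaces) is called compact-strategies, open-preferences if every $\mathbf{S}_i$ is compact and $\mathcal{G}$ carries a topology such that the preferences depend continuously (uniformly) on the game: for each $i\in A$ the set $\{(G,\sigma,\sigma')\in\mathcal{G}\times\mathbf{S}\times\mathbf{S}\mid \sigma\prec^G_i\sigma'\}$ is open in $\mathcal{G}\times\mathbf{S}\times\mathbf{S}$ (in particular each $\prec_i^G$ is an open subset of $\mathbf{S}\times\mathbf{S}$). Density of $\mathcal{G}'$ refers to this topology on $\mathcal{G}$. *)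

theory Defs
  imports "HOL-Analysis.Analysis"
begin

definition profiles :: "'i set \<Rightarrow> ('i \<Rightarrow> 's topology) \<Rightarrow> ('i \<Rightarrow> 's) set" where
  "profiles A S = topspace (product_topology S A)"

text \<open>A game G is given by preferences pref G i :: profile => profile => bool
  (pref G i x y means x is strictly worse than y for agent i).
  Nash equilibrium of game G.\<close>
definition nash_equilibrium ::
  "'i set \<Rightarrow> ('i \<Rightarrow> 's topology) \<Rightarrow> ('g \<Rightarrow> 'i \<Rightarrow> ('i \<Rightarrow> 's) \<Rightarrow> ('i \<Rightarrow> 's) \<Rightarrow> bool)
     \<Rightarrow> 'g \<Rightarrow> ('i \<Rightarrow> 's) \<Rightarrow> bool" where
  "nash_equilibrium A S pref G \<sigma> \<longleftrightarrow>
     \<sigma> \<in> profiles A S \<and>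
     \<not> (\<exists>i\<in>A. \<exists>s\<in>topspace (S i). pref G i \<sigma> (\<sigma>(i := s)))"

text \<open>The class of games is the carrier of the topology TG.\<close>
definition compact_strategies_open_preferences ::
  "'i set \<Rightarrow> ('i \<Rightarrow> 's topology) \<Rightarrow> 'g topology
     \<Rightarrow> ('g \<Rightarrow> 'i \<Rightarrow> ('i \<Rightarrow> 's) \<Rightarrow> ('i \<Rightarrow> 's) \<Rightarrow> bool) \<Rightarrow> bool" where
  "compact_strategies_open_preferences A S TG pref \<longleftrightarrow>
     (\<forall>i\<in>A. compact_space (S i)) \<and>
     (\<forall>i\<in>A. openin (prod_topology TG (prod_topology (product_topology S A) (product_topology S A)))
        {(G, \<sigma>, \<sigma>'). G \<in> topspace TG \<and> \<sigma> \<in> profiles A S \<and> \<sigma>' \<in> profiles A S \<and> pref G i \<sigma> \<sigma>'})"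

end

theory Submission
  imports Defs
begin

text \<open>The games with a Nash equilibrium form a closed set, since their complement is open:
  the set of pairs (game, profile) at which some agent has a profitable unilateral deviation
  is open, being a union over deviations of continuous preimages of the open preference sets.
  If a game G has no equilibrium, this open set contains the fibre over G, which is compact,
  so by the tube lemma it contains U \<times> profiles for a neighbourhood U of G, and no game in U
  has an equilibrium either. A closed set containing a dense set is everything.\<close>

lemma continuous_map_fun_upd_product:
  assumes "i \<in> A" "s \<in> topspace (S i)"
  shows "continuous_map (product_topology S A) (product_topology S A) (\<lambda>\<sigma>. \<sigma>(i := s))"
  unfolding continuous_map_componentwise
proof (intro conjI ballI)
  show "(\<lambda>\<sigma>. \<sigma>(i := s)) ` topspace (product_topology S A) \<subseteq> extensional A"
    using assms(1) by (auto simp: extensional_def)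
next
  fix k assume "k \<in> A"
  then show "continuous_map (product_topology S A) (S k) (\<lambda>\<sigma>. (\<sigma>(i := s)) k)"
    using assms by (cases "k = i") (simp_all add: continuous_map_product_projection)
qed

lemma fun_upd_in_profiles:
  assumes "\<sigma> \<in> profiles A S" "i \<in> A" "s \<in> topspace (S i)"
  shows "\<sigma>(i := s) \<in> profiles A S"
  using continuous_map_funspace[OF continuous_map_fun_upd_product[of i A s S, OF assms(2,3)]] assms(1)
  unfolding profiles_def by (rule funcset_mem)

definition deviation_set ::
  "'i set \<Rightarrow> ('i \<Rightarrow> 's topology) \<Rightarrow> 'g topology
     \<Rightarrow> ('g \<Rightarrow> 'i \<Rightarrow> ('i \<Rightarrow> 's) \<Rightarrow> ('i \<Rightarrow> 's) \<Rightarrow> bool) \<Rightarrow> ('g \<times> ('i \<Rightarrow> 's)) set" where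
  "deviation_set A S TG pref =
     {(G, \<sigma>). G \<in> topspace TG \<and> \<sigma> \<in> profiles A S \<and>
        (\<exists>i\<in>A. \<exists>s\<in>topspace (S i). pref G i \<sigma> (\<sigma>(i := s)))}"

lemma openin_deviation_set:
  fixes A :: "'i set" and S :: "'i \<Rightarrow> 's topology" and TG :: "'g topology"
  assumes "compact_strategies_open_preferences A S TG pref"
  shows "openin (prod_topology TG (product_topology S A)) (deviation_set A S TG pref)"
proof -
  define P where "P = product_topology S A"
  define Pref where "Pref i = {(G, \<sigma>, \<sigma>'). G \<in> topspace TG \<and> \<sigma> \<in> profiles A S \<and>
      \<sigma>' \<in> profiles A S \<and> pref G i \<sigma> \<sigma>'}" for i
  define dev where "dev i s = (\<lambda>(G :: 'g, \<sigma> :: 'i \<Rightarrow> 's). (G, \<sigma>, \<sigma>(i := s)))" for i s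
  define D where "D i s = {x \<in> topspace (prod_topology TG P). dev i s x \<in> Pref i}" for i s
  have "openin (prod_topology TG P) (D i s)" if i: "i \<in> A" and s: "s \<in> topspace (S i)" for i s
  proof -
    have "continuous_map (prod_topology TG P) P (\<lambda>x. (snd x)(i := s))"
      using continuous_map_compose[OF continuous_map_snd continuous_map_fun_upd_product[of i A s S, OF i s]]
      unfolding P_def by (simp add: o_def)
    then have "continuous_map (prod_topology TG P) (prod_topology TG (prod_topology P P)) (dev i s)"
      unfolding dev_def split_beta continuous_map_paired
      using continuous_map_fst continuous_map_snd by blast
    moreover have "openin (prod_topology TG (prod_topology P P)) (Pref i)"
      using assms i unfolding compact_strategies_open_preferences_def P_def Pref_def by blast
    ultimately show ?thesis
      unfolding D_def by (rule openin_continuous_map_preimage)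
  qed
  moreover have "deviation_set A S TG pref = (\<Union>i\<in>A. \<Union>s\<in>topspace (S i). D i s)"
  proof (rule set_eqI)
    fix x :: "'g \<times> ('i \<Rightarrow> 's)"
    obtain G \<sigma> where x: "x = (G, \<sigma>)" by (cases x)
    have "(G, \<sigma>) \<in> D i s \<longleftrightarrow> G \<in> topspace TG \<and> \<sigma> \<in> profiles A S \<and>
        \<sigma>(i := s) \<in> profiles A S \<and> pref G i \<sigma> (\<sigma>(i := s))" for i s
      by (auto simp: D_def dev_def Pref_def P_def profiles_def)
    then show "x \<in> deviation_set A S TG pref \<longleftrightarrow> x \<in> (\<Union>i\<in>A. \<Union>s\<in>topspace (S i). D i s)"
      using fun_upd_in_profiles[of \<sigma> A S] unfolding x deviation_set_def by blast
  qed
  ultimately show ?thesis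
    unfolding P_def by (metis (no_types, lifting) openin_Union imageE)
qed

lemma closedin_games_with_nash_equilibrium:
  assumes "compact_strategies_open_preferences A S TG pref"
  shows "closedin TG {G \<in> topspace TG. \<exists>\<sigma>. nash_equilibrium A S pref G \<sigma>}"
proof -
  define P where "P = product_topology S A"
  let ?N = "topspace TG - {G \<in> topspace TG. \<exists>\<sigma>. nash_equilibrium A S pref G \<sigma>}"
  have "\<exists>U. openin TG U \<and> G \<in> U \<and> U \<subseteq> ?N" if G: "G \<in> ?N" for G
  proof -
    have compact: "compactin P (topspace P)"
      using assms compact_space_product_topology
      unfolding compact_strategies_open_preferences_def compact_space_def P_def by blast
    have open_dev: "openin (prod_topology TG P) (deviation_set A S TG pref)"
      using openin_deviation_set[OF assms] unfolding P_def .
    have "(G, \<sigma>) \<in> deviation_set A S TG pref" if "\<sigma> \<in> profiles A S" for \<sigma>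
      using G that unfolding deviation_set_def nash_equilibrium_def by blast
    then have fibre: "{G} \<times> topspace P \<subseteq> deviation_set A S TG pref"
      unfolding profiles_def P_def by blast
    from G have "G \<in> topspace TG" by blast
    then obtain U V where U: "openin TG U" "G \<in> U"
      and V: "topspace P \<subseteq> V" "U \<times> V \<subseteq> deviation_set A S TG pref"
      using tube_lemma_right[OF open_dev compact _ fibre] by blast
    have "U \<subseteq> ?N"
    proof
      fix H assume H: "H \<in> U"
      have "(H, \<sigma>) \<in> deviation_set A S TG pref" if "\<sigma> \<in> profiles A S" for \<sigma>
        using H V that unfolding profiles_def P_def by blast
      then show "H \<in> ?N"
        using openin_subset[OF U(1)] H unfolding deviation_set_def nash_equilibrium_def by blast
    qed
    with U show ?thesis by blast
  qed
  then have "openin TG ?N"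
    using openin_subopen by blast
  then show ?thesis
    unfolding closedin_def by blast
qed

theorem theorem8:
  fixes A :: "'i set" and S :: "'i \<Rightarrow> 's topology" and TG :: "'g topology"
    and pref :: "'g \<Rightarrow> 'i \<Rightarrow> ('i \<Rightarrow> 's) \<Rightarrow> ('i \<Rightarrow> 's) \<Rightarrow> bool"
    and G' :: "'g set"
  assumes "countable A" and "A \<noteq> {}"
    and "compact_strategies_open_preferences A S TG pref"
    and "G' \<subseteq> topspace TG" and "TG closure_of G' = topspace TG"
    and "\<forall>G\<in>G'. \<exists>\<sigma>. nash_equilibrium A S pref G \<sigma>"
  shows "\<forall>G\<in>topspace TG. \<exists>\<sigma>. nash_equilibrium A S pref G \<sigma>"
proof -
  let ?E = "{G \<in> topspace TG. \<exists>\<sigma>. nash_equilibrium A S pref G \<sigma>}"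
  have "G' \<subseteq> ?E"
    using assms(4,6) by blast
  then have "TG closure_of G' \<subseteq> ?E"
    using closure_of_minimal closedin_games_with_nash_equilibrium[OF assms(3)] by blast
  then show ?thesis
    using assms(5) by blast
qed

end
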